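(* Let $p\geq3$ be prime, $n\geq 2$, and $\Phi_{p^n}(T)=\sum_{k=0}^{p-1}T^{p^{n-1}k}$. In the transfinite Newton algorithm applied to $\Phi_{p^n}$: (1) the maximal slope at step $0$ is $s_0=0$ and $1\in\bar{\mathbb{F}}_p$ is a root of the residue polynomial of $\Phi^{(0,n)}=\Phi_{p^n}$; (2) choosing $z_0=1$, the maximal slope of $\mathrm{NP}(\Phi^{(1,n)})$ is $s_1=\frac{1}{p^{n-1}(p-1)}$, and $(-1)^n\zeta_{2(p-1)}$ is a root of the residue polynomial of $\Phi^{(1,n)}$ of multiplicity $p^{n-1}$. Consequently, choosing $z_1=(-1)^n\zeta_{2(p-1)}$, one has $\zeta_{p^n}^{(1)}=1+(-1)^n\zeta_{2(p-1)}\,p^{\frac{1}{p^{n-1}(p-1)}}$.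
   Context: $\mathbb{L}_p$ is the $p$-adic Mal'cev–Neumann field of formal sums $\sum_{x\in\mathbb{Q}}[\alpha_x]p^x$ ($\alpha_x\in\bar{\mathbb{F}}_p$, $[\cdot]$ Teichmüller lift, well-ordered support), valuation $v_p$ = minimum of support, $C_x(\alpha)=\alpha_x$. $\zeta_{2(p-1)}$ is a fixed primitive $2(p-1)$-th root of unity in $\bar{\mathbb{F}}_p$, identified with its Teichmüller lift. For $P(T)=\sum_{k=0}^Na_kT^{N-k}$ ($a_0,a_N\ne0$): $\mathrm{NP}(P)$ is the lower convex hull of $(k,v_p(a_k))$; $m_{\max}$ is the largest breakpoint $<N$; maximal slope $s_{\max}=\frac{v_p(a_N)-v_p(a_{m_{\max}})}{N-m_{\max}}$; residue polynomial $\mathrm{Res}_P(T)=\sum_{k=0}^{N-m_{\max}}C_{v_p(a_{m_{\max}})+s_{\max}(N-m_{\max}-k)}(a_{N-k})T^k$. Algorithm: $\zeta_{p^n}^{(-1)}=0$; for $i\ge0$, $\Phi^{(i,n)}(T)=\Phi_{p^n}(T+\zeta_{p^n}^{(i-1)})$, $s_i$ its maximal slope, $z_i$ a chosen root of $\mathrm{Res}_{\Phi^{(i,n)}}$, and $\zeta_{p^n}^{(i)}=\zeta_{p^n}^{(i-1)}+[z_i]p^{s_i}$. *)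

theory Defs
  imports "HOL-Computational_Algebra.Computational_Algebra" "HOL-Number_Theory.Cong"
begin

text \<open>An element sum_x [alpha_x] p^x of L_p is represented by its coefficient function
  x |-> alpha_x = C_x(alpha), of type rat => F, where F plays the role of the algebraic
  closure of F_p.\<close>

type_synonym 'F mn = "rat \<Rightarrow> 'F"

definition mn_val :: "'F::zero mn \<Rightarrow> rat" where
  "mn_val a = (LEAST x. a x \<noteq> 0)"

definition mn_mono :: "'F::zero \<Rightarrow> rat \<Rightarrow> 'F mn" where
  "mn_mono z s = (\<lambda>x. if x = s then z else 0)"

text \<open>Teichmueller digits of an integer m (as an element of Z_p inside L_p):
  the unique digits d_i in {0..p-1} with m = sum_i [d_i] p^i.  Since the Teichmueller
  lift of d satisfies [d] = d^(p^k) mod p^k, this is characterised by the congruences below.\<close>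
definition teich_digits :: "nat \<Rightarrow> int \<Rightarrow> nat \<Rightarrow> int" where
  "teich_digits p m = (THE d. (\<forall>i. 0 \<le> d i \<and> d i < int p) \<and>
      (\<forall>k. [m = (\<Sum>i<k. d i ^ (p ^ k) * int p ^ i)] (mod (int p ^ k))))"

definition int_mn :: "nat \<Rightarrow> int \<Rightarrow> 'F::ring_1 mn" where
  "int_mn p m = (\<lambda>x. if x \<in> \<nat> then of_int (teich_digits p m (nat \<lfloor>x\<rfloor>)) else 0)"

text \<open>Lower convex hull of the points (k, v_p(a_k)), a_k nonzero, as a function on [0,N]:
  the supremum of all affine functions lying below all the points.\<close>
definition np_fun :: "(nat \<Rightarrow> 'F::zero mn) \<Rightarrow> nat \<Rightarrow> real \<Rightarrow> real" where
  "np_fun a N x = Sup {c * x + d | c d :: real.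
      \<forall>k\<le>N. a k \<noteq> (\<lambda>_. 0) \<longrightarrow> c * real k + d \<le> real_of_rat (mn_val (a k))}"

definition np_breakpoint :: "(nat \<Rightarrow> 'F::zero mn) \<Rightarrow> nat \<Rightarrow> nat \<Rightarrow> bool" where
  "np_breakpoint a N m \<longleftrightarrow> m \<le> N \<and> (m = 0 \<or> m = N \<or>
      np_fun a N (real m) - np_fun a N (real m - 1) \<noteq> np_fun a N (real m + 1) - np_fun a N (real m))"

definition np_mmax :: "(nat \<Rightarrow> 'F::zero mn) \<Rightarrow> nat \<Rightarrow> nat" where
  "np_mmax a N = (GREATEST m. np_breakpoint a N m \<and> m < N)"

definition np_smax :: "(nat \<Rightarrow> 'F::zero mn) \<Rightarrow> nat \<Rightarrow> rat" where
  "np_smax a N = (mn_val (a N) - mn_val (a (np_mmax a N))) / of_nat (N - np_mmax a N)"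

definition res_poly :: "(nat \<Rightarrow> 'F::comm_monoid_add mn) \<Rightarrow> nat \<Rightarrow> 'F poly" where
  "res_poly a N = (let m = np_mmax a N; s = np_smax a N in
      (\<Sum>k\<le>N - m. monom (a (N - k) (mn_val (a m) + s * of_nat (N - m - k))) k))"

text \<open>Coefficient sequence a_k (coefficient of T^(N-k)), N = degree P, of an integer polynomial.\<close>
definition int_poly_mn :: "nat \<Rightarrow> int poly \<Rightarrow> nat \<Rightarrow> 'F::ring_1 mn" where
  "int_poly_mn p P k = int_mn p (coeff P (degree P - k))"

definition cyclo_pp :: "nat \<Rightarrow> nat \<Rightarrow> int poly" where
  "cyclo_pp p n = (\<Sum>k<p. monom 1 (p ^ (n - 1) * k))"

end

theory Submission
  imports Defs
begin

(* All coefficients of Phi_{p^n} are 0 or 1, so every point of its Newton polygon lies at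
   height 0: s_0 = 0, m_max = 0, and the residue polynomial is Phi_{p^n} mod p, which vanishes
   at 1 because Phi_{p^n}(1) = p.
   Modulo p the Frobenius turns Phi_{p^n}(T + 1) = sum_{k<p} ((T + 1)^(p^(n-1)))^k into
   sum_{k<p} (T^(p^(n-1)) + 1)^k = T^N, N = p^(n-1) (p - 1), while its leading coefficient
   is 1 and its constant term is Phi_{p^n}(1) = p. So the Newton polygon of Phi^(1,n) is the
   single segment from (0,0) to (N,1), s_1 = 1/N, and the residue polynomial is
   1 + T^N = (1 + T^(p-1))^(p^(n-1)). Since zeta^(p-1) = -1 and p - 1 is even, (-1)^n zeta is
   a simple root of 1 + T^(p-1), hence a root of multiplicity p^(n-1).
   Reading off valuations of integers in L_p requires their Teichmueller digits; these exist
   and are unique by p-adic successive approximation, driven by the congruence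
   x^(p^(k+1)) = x^(p^k) (mod p^(k+1)). *)

section \<open>Teichmueller digits of integers\<close>

lemma power_add_prime_cong:
  fixes a b :: int
  assumes "prime p"
  shows "[(a + b) ^ p = a ^ p + b ^ p] (mod int p)"
proof -
  have "(a + b) ^ p = (\<Sum>k\<le>p. of_nat (p choose k) * a ^ k * b ^ (p - k))"
    by (rule binomial_ring)
  also have "[\<dots> = (\<Sum>k\<in>{0, p}. of_nat (p choose k) * a ^ k * b ^ (p - k))] (mod int p)"
  proof -
    have "int p dvd (\<Sum>k\<in>{..p} - {0, p}. of_nat (p choose k) * a ^ k * b ^ (p - k))"
      using assms by (intro dvd_sum dvd_mult2) (auto intro: dvd_choose_prime simp flip: of_nat_dvd_iff)
    moreover have "{0, p} \<subseteq> {..p}" by auto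
    ultimately show ?thesis
      by (simp add: cong_iff_dvd_diff sum_diff)
  qed
  finally show ?thesis
    using prime_gt_0_nat[OF assms] by (simp add: add.commute)
qed

lemma fermat_little_int:
  assumes "prime p"
  shows "[x ^ p = x] (mod int p)"
proof -
  have nat_case: "[int a ^ p = int a] (mod int p)" for a
  proof (induction a)
    case 0
    then show ?case using prime_gt_0_nat[OF assms] by (simp add: power_0_left)
  next
    case (Suc a)
    have "[(int a + 1) ^ p = int a ^ p + 1] (mod int p)"
      using power_add_prime_cong[OF assms, of "int a" 1] by simp
    then show ?case
      using Suc.IH by (simp add: add.commute) (meson cong_add cong_refl cong_trans)
  qed
  have "[x = int (nat (x mod int p))] (mod int p)"
    using prime_gt_0_nat[OF assms] by (simp add: cong_def)
  then show ?thesis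
    using nat_case by (meson cong_pow cong_sym cong_trans)
qed

lemma power_cong_power_modulus_Suc:
  fixes a b :: int
  assumes "[a = b] (mod int p ^ j)" "j \<ge> 1"
  shows "[a ^ p = b ^ p] (mod int p ^ Suc j)"
proof -
  define S where "S = (\<Sum>i<p. b ^ (p - Suc i) * a ^ i)"
  have "[a = b] (mod int p)"
    using assms by (auto intro: cong_dvd_modulus simp: dvd_power)
  then have "[S = (\<Sum>i<p. b ^ (p - Suc i) * b ^ i)] (mod int p)"
    unfolding S_def by (intro cong_sum cong_mult cong_pow cong_refl)
  also have "(\<Sum>i<p. b ^ (p - Suc i) * b ^ i) = of_nat p * b ^ (p - 1)"
    by (simp flip: power_add)
  finally have "int p dvd S"
    by (simp add: cong_dvd_iff)
  moreover have "int p ^ j dvd a - b"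
    using assms(1) by (simp add: cong_iff_dvd_diff)
  ultimately have "int p ^ j * int p dvd (a - b) * S"
    by (simp add: mult_dvd_mono)
  then show ?thesis
    by (simp add: cong_iff_dvd_diff power_diff_sumr2 S_def mult.commute)
qed

lemma power_prime_power_cong_Suc:
  assumes "prime p"
  shows "[x ^ (p ^ Suc k) = x ^ (p ^ k)] (mod int p ^ Suc k)"
proof (induction k)
  case 0
  then show ?case using fermat_little_int[OF assms] by simp
next
  case (Suc k)
  then have "[(x ^ (p ^ Suc k)) ^ p = (x ^ (p ^ k)) ^ p] (mod int p ^ Suc (Suc k))"
    by (intro power_cong_power_modulus_Suc) simp_all
  then show ?case by (simp add: power_mult[symmetric] mult.commute)
qed

lemma power_prime_power_cong_stable:
  assumes "prime p" "K \<le> Suc a"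
  shows "[x ^ (p ^ a) = x ^ (p ^ (K - 1))] (mod int p ^ K)"
  using assms(2)
proof (induction a)
  case 0
  then show ?case by (cases K) simp_all
next
  case (Suc a)
  show ?case
  proof (cases "K = Suc (Suc a)")
    case True
    then show ?thesis by simp
  next
    case False
    have "[x ^ (p ^ Suc a) = x ^ (p ^ a)] (mod int p ^ K)"
      by (rule cong_dvd_modulus[OF power_prime_power_cong_Suc[OF assms(1)]])
        (rule le_imp_power_dvd, use False Suc.prems in linarith)
    then show ?thesis using Suc False by (auto intro: cong_trans)
  qed
qed

lemma power_prime_power_cong:
  assumes "prime p" "K \<le> Suc a" "K \<le> Suc b"
  shows "[x ^ (p ^ a) = x ^ (p ^ b)] (mod int p ^ K)"
  using power_prime_power_cong_stable[OF assms(1,2)] power_prime_power_cong_stable[OF assms(1,3)]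
  by (meson cong_sym cong_trans)

definition teich_expansion_below :: "nat \<Rightarrow> int \<Rightarrow> nat \<Rightarrow> (nat \<Rightarrow> int) \<Rightarrow> bool" where
  "teich_expansion_below p m K d \<longleftrightarrow> (\<forall>i<K. 0 \<le> d i \<and> d i < int p) \<and>
     [m = (\<Sum>i<K. d i ^ (p ^ K) * int p ^ i)] (mod int p ^ K)"

definition teich_expansion :: "nat \<Rightarrow> int \<Rightarrow> (nat \<Rightarrow> int) \<Rightarrow> bool" where
  "teich_expansion p m d \<longleftrightarrow> (\<forall>i. 0 \<le> d i \<and> d i < int p) \<and>
     (\<forall>k. [m = (\<Sum>i<k. d i ^ (p ^ k) * int p ^ i)] (mod int p ^ k))"

lemma teich_digits_altdef: "teich_digits p m = (THE d. teich_expansion p m d)"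
  unfolding teich_digits_def teich_expansion_def ..

lemma teich_expansion_iff_below: "teich_expansion p m d \<longleftrightarrow> (\<forall>K. teich_expansion_below p m K d)"
  unfolding teich_expansion_def teich_expansion_below_def by (blast intro: lessI)

lemma teich_sum_exponent_cong:
  assumes "prime p" "K \<le> Suc a" "K \<le> Suc b"
  shows "[(\<Sum>i<L. d i ^ (p ^ a) * int p ^ i) = (\<Sum>i<L. d i ^ (p ^ b) * int p ^ i)] (mod int p ^ K)"
  by (intro cong_sum cong_mult power_prime_power_cong[OF assms] cong_refl)

lemma teich_expansion_below_mono:
  assumes "prime p" "teich_expansion_below p m K d" "L \<le> K"
  shows "teich_expansion_below p m L d"
proof -
  let ?term = "\<lambda>e i. d i ^ (p ^ e) * int p ^ i"
  have "[m = (\<Sum>i<K. ?term K i)] (mod int p ^ L)"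
    using assms(2) unfolding teich_expansion_below_def
    by (blast intro: cong_dvd_modulus le_imp_power_dvd assms(3))
  also have "(\<Sum>i<K. ?term K i) = (\<Sum>i<L. ?term K i) + (\<Sum>i\<in>{L..<K}. ?term K i)"
    using assms(3) by (simp add: lessThan_atLeast0 sum.atLeastLessThan_concat)
  also have "[(\<Sum>i<L. ?term K i) + (\<Sum>i\<in>{L..<K}. ?term K i) = (\<Sum>i<L. ?term K i)] (mod int p ^ L)"
    unfolding cong_add_lcancel_0 cong_0_iff by (intro dvd_sum dvd_mult le_imp_power_dvd) simp
  also have "[(\<Sum>i<L. ?term K i) = (\<Sum>i<L. ?term L i)] (mod int p ^ L)"
    by (rule teich_sum_exponent_cong[OF assms(1)]) (use assms(3) in simp_all)
  finally show ?thesis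
    using assms(2,3) unfolding teich_expansion_below_def by auto
qed

lemma teich_expansion_below_Suc:
  assumes "prime p" "teich_expansion_below p m K d"
  shows "\<exists>e. teich_expansion_below p m (Suc K) e"
proof -
  define S where "S = (\<Sum>i<K. d i ^ (p ^ Suc K) * int p ^ i)"
  have "[m = (\<Sum>i<K. d i ^ (p ^ K) * int p ^ i)] (mod int p ^ K)"
    using assms(2) by (simp add: teich_expansion_below_def)
  also have "[(\<Sum>i<K. d i ^ (p ^ K) * int p ^ i) = S] (mod int p ^ K)"
    unfolding S_def by (rule teich_sum_exponent_cong[OF assms(1)]) simp_all
  finally have "int p ^ K dvd m - S"
    by (simp add: cong_iff_dvd_diff)
  then obtain t where t: "m = S + int p ^ K * t"
    by (metis dvdE diff_eq_eq add.commute)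
  define e where "e = d(K := t mod int p)"
  \<comment> \<open>only the residue of the new digit mod p matters, as it enters through its p^(K+1)-th power\<close>
  have "[e K ^ (p ^ Suc K) = e K ^ (p ^ 0)] (mod int p ^ 1)"
    by (rule power_prime_power_cong[OF assms(1)]) simp_all
  then have "[e K ^ (p ^ Suc K) = t] (mod int p)"
    unfolding e_def by (simp add: cong_def)
  then have "int p ^ K * int p dvd int p ^ K * (e K ^ (p ^ Suc K) - t)"
    by (simp add: cong_iff_dvd_diff)
  then have "[S + e K ^ (p ^ Suc K) * int p ^ K = m] (mod int p ^ Suc K)"
    unfolding t by (simp add: cong_iff_dvd_diff algebra_simps)
  moreover have "(\<Sum>i<Suc K. e i ^ (p ^ Suc K) * int p ^ i) = S + e K ^ (p ^ Suc K) * int p ^ K"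
    unfolding e_def S_def by simp
  ultimately have "[m = (\<Sum>i<Suc K. e i ^ (p ^ Suc K) * int p ^ i)] (mod int p ^ Suc K)"
    by (simp add: cong_sym_eq)
  moreover have "\<forall>i<Suc K. 0 \<le> e i \<and> e i < int p"
    using assms(2) prime_gt_0_nat[OF assms(1)]
    unfolding teich_expansion_below_def e_def by (auto simp: less_Suc_eq)
  ultimately show ?thesis
    unfolding teich_expansion_below_def by blast
qed

lemma ex_teich_expansion_below:
  assumes "prime p"
  shows "\<exists>d. teich_expansion_below p m K d"
proof (induction K)
  case 0
  then show ?case by (simp add: teich_expansion_below_def)
next
  case (Suc K)
  then show ?case using teich_expansion_below_Suc[OF assms] by blast
qed

lemma teich_expansion_below_unique:
  assumes "prime p" "teich_expansion_below p m K d" "teich_expansion_below p m K e" "i < K"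
  shows "d i = e i"
  using assms(4)
proof (induction i rule: less_induct)
  case (less i)
  define q where "q = p ^ Suc i"
  have d: "teich_expansion_below p m (Suc i) d" and e: "teich_expansion_below p m (Suc i) e"
    using teich_expansion_below_mono[OF assms(1)] assms(2,3) less.prems by (auto simp: Suc_le_eq)
  have "(\<Sum>j<i. d j ^ q * int p ^ j) = (\<Sum>j<i. e j ^ q * int p ^ j)"
    using less.IH less.prems by (intro sum.cong) auto
  moreover have "[(\<Sum>j<Suc i. d j ^ q * int p ^ j) = (\<Sum>j<Suc i. e j ^ q * int p ^ j)] (mod int p ^ Suc i)"
    using d e unfolding teich_expansion_below_def q_def by (meson cong_sym cong_trans)
  ultimately have "int p ^ i * int p dvd int p ^ i * (d i ^ q - e i ^ q)"
    by (simp add: cong_iff_dvd_diff algebra_simps)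
  then have "[d i ^ q = e i ^ q] (mod int p)"
    using assms(1) by (simp add: cong_iff_dvd_diff)
  moreover have "[d i ^ q = d i ^ (p ^ 0)] (mod int p ^ 1)" "[e i ^ q = e i ^ (p ^ 0)] (mod int p ^ 1)"
    unfolding q_def by (rule power_prime_power_cong[OF assms(1)]; simp)+
  ultimately have "[d i = e i] (mod int p)"
    by (simp, meson cong_sym cong_trans)
  moreover have "0 \<le> d i" "d i < int p" "0 \<le> e i" "e i < int p"
    using d e unfolding teich_expansion_below_def by auto
  ultimately show ?case
    by (metis cong_def mod_pos_pos_trivial)
qed

lemma ex1_teich_expansion:
  assumes "prime p"
  shows "\<exists>!d. teich_expansion p m d"
proof
  define D where "D K = (SOME d. teich_expansion_below p m K d)" for K
  have D: "teich_expansion_below p m K (D K)" for K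
    unfolding D_def using ex_teich_expansion_below[OF assms] by (rule someI_ex)
  define d where "d i = D (Suc i) i" for i
  have agree: "d i = D K i" if "i < K" for i K
  proof -
    have "teich_expansion_below p m (Suc i) (D K)"
      using teich_expansion_below_mono[OF assms D] that by (simp add: Suc_le_eq)
    then show ?thesis
      unfolding d_def using teich_expansion_below_unique[OF assms D] by blast
  qed
  have d: "teich_expansion_below p m K d" for K
  proof -
    have "(\<Sum>i<K. d i ^ (p ^ K) * int p ^ i) = (\<Sum>i<K. D K i ^ (p ^ K) * int p ^ i)"
      using agree by (intro sum.cong) auto
    then show ?thesis
      using D[of K] agree unfolding teich_expansion_below_def by simp
  qed
  then show "teich_expansion p m d"
    by (simp add: teich_expansion_iff_below)
  fix e assume "teich_expansion p m e"
  then have "e i = d i" for i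
    using teich_expansion_below_unique[OF assms _ d, of "Suc i"]
    by (simp add: teich_expansion_iff_below)
  then show "e = d" ..
qed

lemma teich_digits_eqI:
  assumes "prime p" "teich_expansion p m d"
  shows "teich_digits p m = d"
  unfolding teich_digits_altdef using assms ex1_teich_expansion by (blast intro: the1_equality)

lemma teich_expansion_teich_digits:
  assumes "prime p"
  shows "teich_expansion p m (teich_digits p m)"
  unfolding teich_digits_altdef using ex1_teich_expansion[OF assms] by (rule theI')

lemma teich_digits_0_cong:
  assumes "prime p"
  shows "[teich_digits p m 0 = m] (mod int p)"
proof -
  have "[m = (\<Sum>i<1. teich_digits p m i ^ (p ^ 1) * int p ^ i)] (mod int p ^ 1)"
    using teich_expansion_teich_digits[OF assms] unfolding teich_expansion_def by blast
  then have "[m = teich_digits p m 0 ^ p] (mod int p)"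
    by simp
  then show ?thesis
    using fermat_little_int[OF assms] by (meson cong_sym cong_trans)
qed

lemma teich_digits_zero:
  assumes "prime p"
  shows "teich_digits p 0 = (\<lambda>_. 0)"
  using assms prime_gt_0_nat[OF assms]
  by (intro teich_digits_eqI) (auto simp: teich_expansion_def power_0_left)

lemma teich_digits_prime_power:
  assumes "prime p"
  shows "teich_digits p (int p ^ j) = (\<lambda>i. if i = j then 1 else 0)"
proof (rule teich_digits_eqI[OF assms])
  have "(\<Sum>i<k. (if i = j then 1 else 0) ^ (p ^ k) * int p ^ i) = (\<Sum>i<k. if i = j then int p ^ j else 0)" for k
    using prime_gt_0_nat[OF assms] by (intro sum.cong) (auto simp: power_0_left)
  then have "[int p ^ j = (\<Sum>i<k. (if i = j then 1 else 0) ^ (p ^ k) * int p ^ i)] (mod int p ^ k)" for k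
    by (simp add: cong_0_iff le_imp_power_dvd)
  then show "teich_expansion p (int p ^ j) (\<lambda>i. if i = j then 1 else 0)"
    using prime_gt_1_nat[OF assms] by (simp add: teich_expansion_def)
qed

lemma int_mn_of_nat: "(int_mn p m :: 'F::ring_1 mn) (of_nat j) = of_int (teich_digits p m j)"
  unfolding int_mn_def by simp

lemma int_mn_eq_0_if_not_Nats: "x \<notin> \<nat> \<Longrightarrow> (int_mn p m :: 'F::ring_1 mn) x = 0"
  unfolding int_mn_def by simp

lemma int_mn_at_0:
  assumes "prime p" "CHAR('F::ring_1) = p"
  shows "(int_mn p m :: 'F mn) 0 = of_int m"
proof -
  have "(int_mn p m :: 'F mn) 0 = of_int (teich_digits p m 0)"
    using int_mn_of_nat[of p m 0] by simp
  also have "\<dots> = of_int m"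
    using teich_digits_0_cong[OF assms(1)] assms(2) by (simp add: of_int_eq_iff_cong_CHAR)
  finally show ?thesis .
qed

lemma int_mn_zero:
  assumes "prime p"
  shows "int_mn p 0 = (\<lambda>_. 0)"
  unfolding int_mn_def teich_digits_zero[OF assms] by auto

lemma int_mn_prime_power:
  assumes "prime p"
  shows "(int_mn p (int p ^ j) :: 'F::ring_1 mn) = mn_mono 1 (of_nat j)"
  unfolding int_mn_def mn_mono_def teich_digits_prime_power[OF assms]
  by (auto simp: fun_eq_iff elim!: Nats_cases)

lemma int_mn_one:
  assumes "prime p"
  shows "(int_mn p 1 :: 'F::ring_1 mn) = mn_mono 1 0"
  using int_mn_prime_power[OF assms, of 0] by simp

section \<open>The polynomials Phi_{p^n}(T) and Phi_{p^n}(T + 1)\<close>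

lemma coeff_cyclo_pp:
  assumes "0 < p"
  shows "coeff (cyclo_pp p n) j = (if \<exists>k<p. j = p ^ (n - 1) * k then 1 else 0)"
proof -
  have inj: "inj (\<lambda>k. p ^ (n - 1) * k)"
    using assms by (simp add: inj_on_def)
  have "coeff (cyclo_pp p n) j = (\<Sum>k<p. if p ^ (n - 1) * k = j then 1 else 0)"
    unfolding cyclo_pp_def by (simp add: coeff_sum coeff_monom)
  also have "\<dots> = card {k. k < p \<and> p ^ (n - 1) * k = j}"
    by (simp add: sum.If_cases Int_def conj_commute)
  also have "\<dots> = (if \<exists>k<p. j = p ^ (n - 1) * k then 1 else 0)"
  proof (cases "\<exists>k<p. j = p ^ (n - 1) * k")
    case True
    then obtain k where "k < p" "j = p ^ (n - 1) * k" by blast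
    then have "{k. k < p \<and> p ^ (n - 1) * k = j} = {k}"
      using inj by (auto dest: injD)
    then show ?thesis using True by simp
  qed auto
  finally show ?thesis .
qed

lemma degree_cyclo_pp:
  assumes "0 < p"
  shows "degree (cyclo_pp p n) = p ^ (n - 1) * (p - 1)"
proof (rule antisym)
  show "degree (cyclo_pp p n) \<le> p ^ (n - 1) * (p - 1)"
    by (rule degree_le) (auto simp: coeff_cyclo_pp[OF assms])
  show "p ^ (n - 1) * (p - 1) \<le> degree (cyclo_pp p n)"
    using assms by (intro le_degree) (auto simp: coeff_cyclo_pp[OF assms])
qed

lemma lead_coeff_cyclo_pp: "0 < p \<Longrightarrow> lead_coeff (cyclo_pp p n) = 1"
  by (auto simp: degree_cyclo_pp coeff_cyclo_pp)

lemma coeff_0_cyclo_pp: "0 < p \<Longrightarrow> coeff (cyclo_pp p n) 0 = 1"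
  by (auto simp: coeff_cyclo_pp)

lemma coeff_cyclo_pp_01: "0 < p \<Longrightarrow> coeff (cyclo_pp p n) j \<in> {0, 1}"
  by (simp add: coeff_cyclo_pp)

lemma poly_cyclo_pp_1: "poly (cyclo_pp p n) 1 = int p"
  by (simp add: cyclo_pp_def poly_sum poly_monom)

lemma pcompose_monom_1: "pcompose (monom 1 m) q = q ^ m"
  by (induction m) (simp_all add: monom_Suc pcompose_pCons pcompose_1 monom_0)

lemma pcompose_cyclo_pp: "pcompose (cyclo_pp p n) q = (\<Sum>k<p. q ^ (p ^ (n - 1) * k))"
  by (simp add: cyclo_pp_def pcompose_sum pcompose_monom_1)

lemma coeff_one_plus_X_power: "coeff ([:1, 1:] ^ m :: 'a::comm_semiring_1 poly) j = of_nat (m choose j)"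
proof (cases "j \<le> m")
  case True
  then show ?thesis by (simp add: coeff_linear_poly_power)
next
  case False
  then have "degree ([:1, 1:] ^ m :: 'a poly) < j"
    using degree_power_le[of "[:1, 1:] :: 'a poly" m] by simp
  then show ?thesis using False by (simp add: coeff_eq_0 binomial_eq_0)
qed

lemma of_int_coeff_pcompose_cyclo_pp:
  "of_int (coeff (pcompose (cyclo_pp p n) [:1, 1:]) j)
    = coeff (\<Sum>k<p. [:1, 1:] ^ (p ^ (n - 1) * k) :: 'a::comm_ring_1 poly) j"
  by (simp add: pcompose_cyclo_pp coeff_sum coeff_one_plus_X_power)

lemma sum_one_plus_X_powers_CHAR:
  assumes "prime p" "CHAR('a::idom) = p"
  shows "(\<Sum>k<p. [:1, 1:] ^ (p ^ j * k) :: 'a poly) = monom 1 (p ^ j * (p - 1))"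
proof -
  define Z :: "'a poly" where "Z = monom 1 (p ^ j)"
  have frob: "(x + y) ^ (p ^ i) = x ^ (p ^ i) + y ^ (p ^ i)" for x y :: "'a poly" and i
    using assms by (intro freshmans_dream') simp_all
  have "[:1, 1:] = monom 1 1 + (1 :: 'a poly)"
    by (simp add: monom_Suc one_pCons)
  then have "[:1, 1:] ^ p ^ j = Z + 1"
    using frob[of "monom 1 1" 1 j] by (simp add: Z_def monom_power)
  then have "Z * (\<Sum>k<p. [:1, 1:] ^ (p ^ j * k)) = (Z + 1) ^ p - 1"
    by (simp add: power_mult power_diff_1_eq)
  also have "\<dots> = Z * Z ^ (p - 1)"
    using frob[of Z 1 1] prime_gt_0_nat[OF assms(1)] by (simp flip: power_Suc)
  finally show ?thesis
    by (simp add: Z_def monom_power)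
qed

lemma of_int_coeff_pcompose_cyclo_pp_CHAR:
  assumes "prime p" "CHAR('a::idom) = p"
  shows "of_int (coeff (pcompose (cyclo_pp p n) [:1, 1:]) j)
    = (if j = p ^ (n - 1) * (p - 1) then 1 else (0 :: 'a))"
  by (simp add: of_int_coeff_pcompose_cyclo_pp sum_one_plus_X_powers_CHAR[OF assms] coeff_monom)

lemma degree_pcompose_cyclo_pp:
  "0 < p \<Longrightarrow> degree (pcompose (cyclo_pp p n) [:1, 1:]) = p ^ (n - 1) * (p - 1)"
  by (simp add: degree_pcompose degree_cyclo_pp)

lemma lead_coeff_pcompose_cyclo_pp: "0 < p \<Longrightarrow> lead_coeff (pcompose (cyclo_pp p n) [:1, 1:]) = 1"
  by (simp add: lead_coeff_comp lead_coeff_cyclo_pp)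

section \<open>Roots of the residue polynomial\<close>

lemma power_eq_neg_one_if_square_eq_one:
  fixes \<zeta> :: "'a::field"
  assumes "\<zeta> ^ (2 * m) = 1" "\<zeta> ^ m \<noteq> 1"
  shows "\<zeta> ^ m = -1"
  using assms by (simp add: power_mult power2_eq_1_iff mult.commute)

lemma order_power:
  fixes g :: "'a::idom poly"
  assumes "g \<noteq> 0"
  shows "order a (g ^ k) = k * order a g"
  using assms by (induction k) (simp_all add: order_mult)

lemma order_eq_1_if_pderiv_nonzero:
  fixes g :: "'a::idom poly"
  assumes "g \<noteq> 0" "poly g a = 0" "poly (pderiv g) a \<noteq> 0"
  shows "order a g = 1"
proof -
  have "\<not> [:-a, 1:] ^ Suc 1 dvd g"
  proof
    assume "[:-a, 1:] ^ Suc 1 dvd g"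
    then obtain h where "g = [:-a, 1:] ^ Suc 1 * h" ..
    then have "pderiv g = [:-a, 1:] ^ Suc 1 * pderiv h + smult (of_nat (Suc 1)) (h * [:-a, 1:] ^ 1)"
      by (simp only: lemma_order_pderiv1)
    then show False
      using assms(3) by simp
  qed
  then have "order a g < 2"
    using order_1[of a g] by (metis Suc_1 not_less power_le_dvd)
  moreover have "order a g \<noteq> 0"
    using assms(1,2) order_root by blast
  ultimately show ?thesis by simp
qed

lemma order_one_plus_monom_CHAR:
  fixes z :: "'a::field"
  assumes "prime p" "CHAR('a) = p" "z ^ (p - 1) = -1"
  shows "poly (1 + monom 1 (p ^ j * (p - 1))) z = 0"
    and "order z (1 + monom 1 (p ^ j * (p - 1))) = p ^ j"
proof -
  define g :: "'a poly" where "g = 1 + monom 1 (p - 1)"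
  have p: "2 \<le> p"
    using assms(1) by (rule prime_ge_2_nat)
  have "g \<noteq> 0"
    using p by (auto simp: g_def poly_eq_iff coeff_1 coeff_monom dest: spec[of _ "p - 1"])
  have g_root: "poly g z = 0"
    using assms(3) by (simp add: g_def poly_monom)
  have "z \<noteq> 0"
    using assms(3) p by (cases "p - 1") auto
  moreover have "(of_nat (p - 1) :: 'a) \<noteq> 0"
    using assms(2) p by (auto simp: of_nat_eq_0_iff_char_dvd dest: dvd_imp_le)
  ultimately have "poly (pderiv g) z \<noteq> 0"
    by (simp add: g_def pderiv_add pderiv_monom poly_monom)
  then have "order z g = 1"
    by (rule order_eq_1_if_pderiv_nonzero[OF \<open>g \<noteq> 0\<close> g_root])
  have g_power: "1 + monom 1 (p ^ j * (p - 1)) = g ^ p ^ j"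
    using assms(1,2) by (simp add: g_def freshmans_dream' monom_power mult.commute)
  show "poly (1 + monom 1 (p ^ j * (p - 1))) z = 0"
    unfolding g_power using p by (simp add: g_root)
  show "order z (1 + monom 1 (p ^ j * (p - 1))) = p ^ j"
    unfolding g_power by (simp add: order_power[OF \<open>g \<noteq> 0\<close>] \<open>order z g = 1\<close>)
qed

section \<open>Newton polygons consisting of a single edge\<close>

lemma mn_mono_nonzero: "z \<noteq> 0 \<Longrightarrow> mn_mono z s \<noteq> (\<lambda>_. 0)"
  unfolding mn_mono_def by (metis (full_types))

lemma mn_val_mn_mono: "z \<noteq> 0 \<Longrightarrow> mn_val (mn_mono z s) = s"
  unfolding mn_val_def mn_mono_def by (rule Least_equality) (auto split: if_splits)

lemma mn_val_in_support:
  assumes "f x \<noteq> 0" and "\<And>x. f x \<noteq> 0 \<Longrightarrow> x \<in> \<nat>"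
  shows "f (mn_val f) \<noteq> 0"
proof -
  obtain j where "x = of_nat j"
    using assms by (auto elim!: Nats_cases)
  define k where "k = (LEAST k::nat. f (of_nat k) \<noteq> 0)"
  have k: "f (of_nat k) \<noteq> 0"
    unfolding k_def using assms(1) \<open>x = of_nat j\<close> by (metis (mono_tags) LeastI)
  have "mn_val f = of_nat k"
    unfolding mn_val_def
  proof (rule Least_equality)
    fix y assume "f y \<noteq> 0"
    then obtain i where "y = of_nat i"
      using assms(2) by (auto elim!: Nats_cases)
    then show "of_nat k \<le> y"
      using \<open>f y \<noteq> 0\<close> unfolding k_def by (simp add: Least_le)
  qed (rule k)
  then show ?thesis using k by simp
qed

lemma mn_val_ge_1:
  assumes "f \<noteq> (\<lambda>_. 0)" "\<And>x. f x \<noteq> 0 \<Longrightarrow> x \<in> \<nat>" "f 0 = 0"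
  shows "1 \<le> mn_val f"
proof -
  have "f (mn_val f) \<noteq> 0"
    using assms(1,2) mn_val_in_support by (metis (full_types))
  then have "mn_val f \<in> \<nat>" "mn_val f \<noteq> 0"
    using assms(2,3) by auto
  then show ?thesis
    by (auto elim!: Nats_cases)
qed

lemma affine_le_if_le_at_endpoints:
  fixes c d c' d' x N :: real
  assumes "d \<le> d'" "c * N + d \<le> c' * N + d'" "0 \<le> x" "x \<le> N" "0 < N"
  shows "c * x + d \<le> c' * x + d'"
proof -
  have "x * (c * N + d) \<le> x * (c' * N + d')" "(N - x) * d \<le> (N - x) * d'"
    using assms by (auto intro: mult_left_mono)
  then have "N * (c * x + d) \<le> N * (c' * x + d')"
    by (simp add: algebra_simps)
  then show ?thesis
    using assms(5) by simp
qed

lemma np_fun_eq_chord: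
  fixes a :: "nat \<Rightarrow> 'F::zero mn"
  assumes "0 < N" "a 0 \<noteq> (\<lambda>_. 0)" "a N \<noteq> (\<lambda>_. 0)"
    and end_val: "mn_val (a N) = mn_val (a 0) + s * of_nat N"
    and above: "\<And>k. k \<le> N \<Longrightarrow> a k \<noteq> (\<lambda>_. 0) \<Longrightarrow> mn_val (a 0) + s * of_nat k \<le> mn_val (a k)"
    and "0 \<le> x" "x \<le> real N"
  shows "np_fun a N x = real_of_rat s * x + real_of_rat (mn_val (a 0))"
  unfolding np_fun_def
proof (rule cSup_eq_maximum)
  have "real_of_rat s * real k + real_of_rat (mn_val (a 0)) \<le> real_of_rat (mn_val (a k))"
    if "k \<le> N" "a k \<noteq> (\<lambda>_. 0)" for k
  proof -
    have "real_of_rat (mn_val (a 0) + s * of_nat k) \<le> real_of_rat (mn_val (a k))"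
      using above[OF that] by (simp only: of_rat_less_eq)
    then show ?thesis
      by (simp add: of_rat_add of_rat_mult)
  qed
  then show "real_of_rat s * x + real_of_rat (mn_val (a 0)) \<in> {c * x + d |c d. \<forall>k\<le>N.
      a k \<noteq> (\<lambda>_. 0) \<longrightarrow> c * real k + d \<le> real_of_rat (mn_val (a k))}"
    by blast
next
  fix y assume "y \<in> {c * x + d |c d. \<forall>k\<le>N.
      a k \<noteq> (\<lambda>_. 0) \<longrightarrow> c * real k + d \<le> real_of_rat (mn_val (a k))}"
  then obtain c d where y: "y = c * x + d"
    and below: "\<forall>k\<le>N. a k \<noteq> (\<lambda>_. 0) \<longrightarrow> c * real k + d \<le> real_of_rat (mn_val (a k))"
    by blast
  have "d \<le> real_of_rat (mn_val (a 0))"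
    using below assms(2) by (metis le0 mult_zero_right of_nat_0 add_0)
  moreover have "c * real N + d \<le> real_of_rat (mn_val (a N))"
    using below assms(3) by blast
  moreover have "real_of_rat (mn_val (a N)) = real_of_rat s * real N + real_of_rat (mn_val (a 0))"
    by (simp add: end_val of_rat_add of_rat_mult)
  ultimately show "y \<le> real_of_rat s * x + real_of_rat (mn_val (a 0))"
    unfolding y using affine_le_if_le_at_endpoints[of d _ c N] assms(1,6,7) by simp
qed

lemma np_single_edge:
  fixes a :: "nat \<Rightarrow> 'F::zero mn"
  assumes "0 < N" "a 0 \<noteq> (\<lambda>_. 0)" "a N \<noteq> (\<lambda>_. 0)"
    and "mn_val (a N) = mn_val (a 0) + s * of_nat N"
    and "\<And>k. k \<le> N \<Longrightarrow> a k \<noteq> (\<lambda>_. 0) \<Longrightarrow> mn_val (a 0) + s * of_nat k \<le> mn_val (a k)"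
  shows "np_mmax a N = 0" and "np_smax a N = s"
proof -
  note chord = np_fun_eq_chord[OF assms]
  show "np_mmax a N = 0"
    unfolding np_mmax_def
  proof (rule Greatest_equality)
    fix m assume m: "np_breakpoint a N m \<and> m < N"
    show "m \<le> 0"
    proof (rule ccontr)
      assume "\<not> m \<le> 0"
      then have "np_fun a N (real m) - np_fun a N (real m - 1) = np_fun a N (real m + 1) - np_fun a N (real m)"
        using m by (simp add: chord algebra_simps)
      then show False
        using m \<open>\<not> m \<le> 0\<close> by (simp add: np_breakpoint_def)
    qed
  qed (use assms(1) in \<open>simp add: np_breakpoint_def\<close>)
  then show "np_smax a N = s"
    using assms(1,4) by (simp add: np_smax_def)
qed

lemma res_poly_single_edge:
  "np_mmax a N = 0 \<Longrightarrow>
    res_poly a N = (\<Sum>k\<le>N. monom (a (N - k) (mn_val (a 0) + np_smax a N * of_nat (N - k))) k)"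
  by (simp add: res_poly_def Let_def)

lemma res_poly_edge_0_1:
  fixes a :: "nat \<Rightarrow> 'F::comm_ring_1 mn"
  assumes "0 < N" "np_mmax a N = 0" "np_smax a N = 1 / of_nat N"
    and a_0: "a 0 = mn_mono 1 0" and a_N: "a N = mn_mono 1 1"
    and integral: "\<And>k x. x \<notin> \<nat> \<Longrightarrow> a k x = 0"
  shows "res_poly a N = 1 + monom 1 N"
proof -
  have "res_poly a N = (\<Sum>k\<le>N. monom (a (N - k) (of_nat (N - k) / of_nat N)) k)"
    using assms(2,3) by (simp add: res_poly_single_edge a_0 mn_val_mn_mono)
  also have "\<dots> = (\<Sum>k\<le>N. monom (if k = 0 \<or> k = N then 1 else 0) k)"
  proof (intro sum.cong refl)
    fix k assume "k \<in> {..N}"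
    show "monom (a (N - k) (of_nat (N - k) / of_nat N)) k = monom (if k = 0 \<or> k = N then 1 else 0) k"
    proof (cases "k = 0 \<or> k = N")
      case True
      then show ?thesis
        using \<open>0 < N\<close> by (auto simp: a_0 a_N mn_mono_def)
    next
      case False
      then have "0 < of_nat (N - k) / (of_nat N :: rat)" "of_nat (N - k) / (of_nat N :: rat) < 1"
        using \<open>k \<in> {..N}\<close> by auto
      then have "of_nat (N - k) / (of_nat N :: rat) \<notin> \<nat>"
        by (auto elim!: Nats_cases)
      then show ?thesis
        using False by (simp add: integral)
    qed
  qed
  also have "\<dots> = 1 + monom 1 N"
    using \<open>0 < N\<close> by (auto simp: poly_eq_iff coeff_sum coeff_monom coeff_1)
  finally show ?thesis .
qed

lemma newton_data_cyclo_pp: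
  fixes p n :: nat
  assumes "prime p" "CHAR('F::comm_ring_1) = p"
  defines "\<Phi> \<equiv> cyclo_pp p n"
  defines "a \<equiv> (int_poly_mn p \<Phi> :: nat \<Rightarrow> 'F mn)"
  shows "np_smax a (degree \<Phi>) = 0" and "poly (res_poly a (degree \<Phi>)) 1 = 0"
proof -
  define N where "N = degree \<Phi>"
  have p: "0 < p" using assms(1) by (rule prime_gt_0_nat)
  have "0 < N"
    using prime_ge_2_nat[OF assms(1)] by (simp add: N_def \<Phi>_def degree_cyclo_pp)
  have a: "a k = int_mn p (coeff \<Phi> (N - k))" for k
    by (simp add: a_def int_poly_mn_def N_def)
  have a_0: "a 0 = mn_mono 1 0" and a_N: "a N = mn_mono 1 0"
    using lead_coeff_cyclo_pp[OF p] coeff_0_cyclo_pp[OF p]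
    by (simp_all add: a int_mn_one[OF assms(1)] N_def \<Phi>_def)
  have "a k = (\<lambda>_. 0) \<or> a k = mn_mono 1 0" for k
    using coeff_cyclo_pp_01[OF p, of n "N - k"]
    by (auto simp: a \<Phi>_def int_mn_zero[OF assms(1)] int_mn_one[OF assms(1)])
  then have "mn_val (a 0) + 0 * of_nat k \<le> mn_val (a k)" if "a k \<noteq> (\<lambda>_. 0)" for k
    using that by (force simp: a_0 mn_val_mn_mono)
  then have "np_mmax a N = 0" and smax: "np_smax a N = 0"
    using np_single_edge[OF \<open>0 < N\<close>, of a 0] by (simp_all add: a_0 a_N mn_mono_nonzero mn_val_mn_mono)
  then have "res_poly a N = (\<Sum>k\<le>N. monom (a (N - k) 0) k)"
    by (simp add: res_poly_single_edge a_0 mn_val_mn_mono)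
  also have "\<dots> = (\<Sum>k\<le>N. monom (of_int (coeff \<Phi> k)) k)"
    by (intro sum.cong refl) (simp add: a int_mn_at_0[OF assms(1,2)])
  finally have "poly (res_poly a N) 1 = of_int (poly \<Phi> 1)"
    by (simp add: poly_sum poly_monom poly_altdef[of \<Phi>] N_def)
  also have "\<dots> = 0"
    by (simp add: \<Phi>_def poly_cyclo_pp_1 flip: assms(2))
  finally show "np_smax a (degree \<Phi>) = 0" and "poly (res_poly a (degree \<Phi>)) 1 = 0"
    using smax by (simp_all add: N_def)
qed

lemma newton_data_pcompose_cyclo_pp:
  fixes p n :: nat
  assumes "prime p" "CHAR('F::idom) = p"
  defines "\<Phi> \<equiv> pcompose (cyclo_pp p n) [:1, 1:]"
  defines "a \<equiv> (int_poly_mn p \<Phi> :: nat \<Rightarrow> 'F mn)"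
  shows "np_smax a (degree \<Phi>) = 1 / of_nat (degree \<Phi>)"
    and "res_poly a (degree \<Phi>) = 1 + monom 1 (degree \<Phi>)"
proof -
  define N where "N = degree \<Phi>"
  have p: "0 < p" using assms(1) by (rule prime_gt_0_nat)
  have N: "N = p ^ (n - 1) * (p - 1)"
    by (simp add: N_def \<Phi>_def degree_pcompose_cyclo_pp[OF p])
  have "0 < N"
    using prime_ge_2_nat[OF assms(1)] by (simp add: N)
  have a: "a k = int_mn p (coeff \<Phi> (N - k))" for k
    by (simp add: a_def int_poly_mn_def N_def)
  have a_0: "a 0 = mn_mono 1 0"
    using lead_coeff_pcompose_cyclo_pp[OF p, of n] by (simp add: a N_def \<Phi>_def int_mn_one[OF assms(1)])
  have a_N: "a N = mn_mono 1 1"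
    using int_mn_prime_power[OF assms(1), of 1] by (simp add: a \<Phi>_def poly_cyclo_pp_1)
  have middle: "a k 0 = 0" if "0 < k" "k < N" for k
    using that of_int_coeff_pcompose_cyclo_pp_CHAR[OF assms(1,2), of n "N - k"]
    by (simp add: a int_mn_at_0[OF assms(1,2)] \<Phi>_def N)
  have "mn_val (a 0) + 1 / of_nat N * of_nat k \<le> mn_val (a k)"
    if "k \<le> N" "a k \<noteq> (\<lambda>_. 0)" for k
  proof (cases "0 < k \<and> k < N")
    case True
    have "1 \<le> mn_val (a k)"
      using that True middle by (intro mn_val_ge_1) (auto simp: a int_mn_eq_0_if_not_Nats)
    moreover have "of_nat k / of_nat N \<le> (1 :: rat)"
      using that \<open>0 < N\<close> by (simp add: divide_le_eq_1)
    ultimately show ?thesis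
      by (simp add: a_0 mn_val_mn_mono)
  next
    case False
    then have "k = 0 \<or> k = N" using that by auto
    then show ?thesis
      using \<open>0 < N\<close> by (auto simp: a_0 a_N mn_val_mn_mono)
  qed
  then have "np_mmax a N = 0" and smax: "np_smax a N = 1 / of_nat N"
    using np_single_edge[OF \<open>0 < N\<close>, of a "1 / of_nat N"] \<open>0 < N\<close>
    by (simp_all add: a_0 a_N mn_mono_nonzero mn_val_mn_mono)
  moreover have "a k x = 0" if "x \<notin> \<nat>" for k x
    using that by (simp add: a int_mn_eq_0_if_not_Nats)
  ultimately have "res_poly a N = 1 + monom 1 N"
    using \<open>0 < N\<close> a_0 a_N by (intro res_poly_edge_0_1) auto
  then show "np_smax a (degree \<Phi>) = 1 / of_nat (degree \<Phi>)"
    and "res_poly a (degree \<Phi>) = 1 + monom 1 (degree \<Phi>)"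
    using smax by (simp_all add: N_def)
qed

theorem proposition3p1:
  fixes p n :: nat and \<zeta> :: "'F::alg_closed_field"
  assumes "prime p" and "p \<ge> 3" and "n \<ge> 2"
    and "CHAR('F) = p"
    and "\<zeta> ^ (2 * (p - 1)) = 1" and "\<forall>j. 0 < j \<and> j < 2 * (p - 1) \<longrightarrow> \<zeta> ^ j \<noteq> 1"
  defines "\<Phi>0 \<equiv> cyclo_pp p n"
    and "\<Phi>1 \<equiv> pcompose (cyclo_pp p n) [:1, 1:]"
  defines "a0 \<equiv> (int_poly_mn p \<Phi>0 :: nat \<Rightarrow> 'F mn)"
    and "a1 \<equiv> (int_poly_mn p \<Phi>1 :: nat \<Rightarrow> 'F mn)"
  defines "s0 \<equiv> np_smax a0 (degree \<Phi>0)"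
    and "s1 \<equiv> np_smax a1 (degree \<Phi>1)"
    and "z1 \<equiv> (-1) ^ n * \<zeta>"
  shows "s0 = 0 \<and> poly (res_poly a0 (degree \<Phi>0)) 1 = 0
    \<and> mn_mono 1 s0 = (int_mn p 1 :: 'F mn)
    \<and> s1 = 1 / (of_nat (p ^ (n - 1) * (p - 1)))
    \<and> poly (res_poly a1 (degree \<Phi>1)) z1 = 0
    \<and> order z1 (res_poly a1 (degree \<Phi>1)) = p ^ (n - 1)
    \<and> s0 \<noteq> s1
    \<and> (\<lambda>x. mn_mono 1 s0 x + mn_mono z1 s1 x)
        = (\<lambda>x. mn_mono 1 0 x + mn_mono ((-1) ^ n * \<zeta>) (1 / of_nat (p ^ (n - 1) * (p - 1))) x)"
proof -
  define N where "N = p ^ (n - 1) * (p - 1)"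
  have "0 < N"
    using assms(2) by (simp add: N_def)
  have deg: "degree \<Phi>1 = N"
    using prime_gt_0_nat[OF assms(1)] by (simp add: N_def \<Phi>1_def degree_pcompose_cyclo_pp)
  have s0: "s0 = 0" and res0: "poly (res_poly a0 (degree \<Phi>0)) 1 = 0"
    using newton_data_cyclo_pp[OF assms(1,4), of n] by (simp_all add: s0_def a0_def \<Phi>0_def)
  have s1: "s1 = 1 / of_nat N" and res1: "res_poly a1 (degree \<Phi>1) = 1 + monom 1 N"
    using newton_data_pcompose_cyclo_pp[OF assms(1,4), of n] deg
    by (simp_all add: s1_def a1_def \<Phi>1_def)
  have "\<zeta> ^ (p - 1) = -1"
    using assms(2,5,6) by (intro power_eq_neg_one_if_square_eq_one) auto
  moreover have "even (p - 1)"
    using prime_odd_nat[OF assms(1)] assms(2) by simp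
  ultimately have "z1 ^ (p - 1) = -1"
    by (simp add: z1_def power_mult_distrib flip: power_mult)
  note residue_root = order_one_plus_monom_CHAR[OF assms(1,4) this, of "n - 1", folded N_def]
  show ?thesis
    using \<open>0 < N\<close> residue_root res0
    by (simp add: s0 s1 res1 z1_def N_def int_mn_one[OF assms(1)])
qed

end
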